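(* Assume $d\ge3$. For every $a\in\mathcal K_d$, $$\bigl(B(a)-d\bigr)\bigl(d+2\sqrt{d-1}\bigr)\le A(a)B(a)-d^2,$$ where the right side lies in $[0,\infty]$ (it is $+\infty$, and the inequality strict, if some $a_i=0$). Equality holds if and only if $a=\mathbf 1$ or $a$ is a coordinate permutation of $$a_\star:=\Big(\frac{d\sqrt{d-1}}{\sqrt{d-1}+d-1},\frac{d}{\sqrt{d-1}+d-1},\dots,\frac{d}{\sqrt{d-1}+d-1}\Big).$$
   Context: $\mathcal K_d:=\{a\in\mathbb R_+^d:\sum_{i=1}^d a_i=d\}$. For $a\in\mathcal K_d$, $A(a):=\sum_{i=1}^d 1/a_i\in[d,\infty]$ (with $A(a)=\infty$ if some $a_i=0$) and $B(a):=\sum_{i=1}^d a_i^2$. *)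

theory Defs
  imports "HOL-Analysis.Analysis" "HOL-Library.Extended_Real"
begin

text \<open>Vectors in R^d are represented as functions nat => real, only indices i < d matter
  (coordinates a_1..a_d correspond to a 0 .. a (d-1)).\<close>

definition K :: "nat \<Rightarrow> (nat \<Rightarrow> real) set" where
  "K d = {a. (\<forall>i<d. 0 \<le> a i) \<and> (\<Sum>i<d. a i) = real d}"

definition A_fun :: "nat \<Rightarrow> (nat \<Rightarrow> real) \<Rightarrow> ereal" where
  "A_fun d a = (if \<exists>i<d. a i = 0 then \<infinity> else ereal (\<Sum>i<d. 1 / a i))"

definition B_fun :: "nat \<Rightarrow> (nat \<Rightarrow> real) \<Rightarrow> real" where
  "B_fun d a = (\<Sum>i<d. (a i)^2)"

definition a_star :: "nat \<Rightarrow> nat \<Rightarrow> real" where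
  "a_star d i = (if i = 0 then real d * sqrt (real d - 1) / (sqrt (real d - 1) + real d - 1)
                 else real d / (sqrt (real d - 1) + real d - 1))"

end

theory Submission imports Defs begin

text \<open>Let \<open>t = a\<^sub>k\<close> be a largest coordinate and \<open>u = (d - t)/(d - 1)\<close> the mean of the others.
  On \<open>0 < s \<le> t\<close> the function \<open>1/s\<close> lies above its Hermite interpolant at the nodes \<open>u\<close> (double)
  and \<open>t\<close>, a quadratic in \<open>s\<close>, with equality only for \<open>s \<in> {u, t}\<close>. Summing over the
  coordinates bounds \<open>A\<close> from below by an affine function of \<open>B\<close> that is exact at the two-point
  vector \<open>(t, u, \<dots>, u)\<close>. Since \<open>B\<close> is at least its value \<open>B\<^sub>0\<close> at the two-point vector, and
  a one-variable cubic inequality (this is where \<open>d \<ge> 3\<close> enters) makes the relevant slope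
  nonnegative, the defect \<open>A B - d\<^sup>2 - (d + 2 \<surd>(d - 1)) (B - d)\<close> is at least the defect of the
  two-point vector. With \<open>r = \<surd>(d - 1)\<close> and \<open>t = 1 + r\<^sup>2 x\<close>, the latter equals
  \<open>d r\<^sup>2 x\<^sup>2 (r (r + 1) x - (r - 1))\<^sup>2 / ((1 - x) (1 + r\<^sup>2 x))\<close>, which vanishes exactly for
  \<open>x = 0\<close> (the vector \<open>1\<close>) and \<open>x = (r - 1)/(r (r + 1))\<close> (the vector \<open>a_star\<close>).\<close>

lemma quadratic_nonneg_of_discriminant:
  fixes a b c x :: real
  assumes "0 < a" "b^2 \<le> 4*a*c"
  shows "0 \<le> a*x^2 + b*x + c"
proof -
  have "4*a*(a*x^2 + b*x + c) = (2*a*x + b)^2 + (4*a*c - b^2)"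
    by (simp add: algebra_simps power2_eq_square)
  also have "\<dots> \<ge> 0" using assms by simp
  finally show ?thesis using assms by (simp add: zero_le_mult_iff)
qed

lemma two_point_slope_numerator_nonneg:
  fixes r x :: real
  assumes "2 \<le> r^2" "0 < r" "0 \<le> x" "x \<le> 1"
  shows "0 \<le> (r-1)^2 - 2*r*(r^2-2)*x + (2*(r+1)^2*r^2 - 2*r)*x^2 - (r+1)^2*r^2*x^3"
proof -
  have r: "6/5 < r"
  proof (rule ccontr)
    assume "\<not> 6/5 < r"
    then have "r^2 \<le> (6/5)^2" using assms(2) by (intro power_mono) auto
    then show False using assms(1) by (simp add: power2_eq_square)
  qed
  have "(r+1)^2*r^2*x^3 \<le> (r+1)^2*r^2*x^2"
    using assms(3,4) by (intro mult_left_mono power_decreasing) auto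
  moreover have "0 \<le> ((r+1)^2*r^2 - 2*r)*x^2 + (- 2*r*(r^2-2))*x + (r-1)^2"
  proof (rule quadratic_nonneg_of_discriminant)
    have "2^2*r \<le> (r+1)^2*r"
      using r by (intro mult_right_mono power_mono) auto
    also have "\<dots> < (r+1)^2*r*r"
      using mult_strict_left_mono[of 1 r "(r+1)^2*r"] r by simp
    finally show "0 < (r+1)^2*r^2 - 2*r" using r by (simp add: power2_eq_square mult.assoc)
    have "4*(r-1) \<le> 2*r^2*(r-1)" using assms(1) r by (intro mult_right_mono) auto
    then have "0 \<le> 4*r*(2*r^3 - 2*r^2 + r - 2)"
      using r by (intro mult_nonneg_nonneg) (auto simp: algebra_simps power2_eq_square power3_eq_cube)
    also have "\<dots> = 4*((r+1)^2*r^2 - 2*r)*(r-1)^2 - (- 2*r*(r^2-2))^2"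
      by (simp add: algebra_simps power2_eq_square power3_eq_cube)
    finally show "(- 2*r*(r^2-2))^2 \<le> 4*((r+1)^2*r^2 - 2*r)*(r-1)^2" by simp
  qed
  ultimately show ?thesis by (simp add: algebra_simps)
qed

lemma two_point_slope_ge:
  fixes r x t u :: real
  assumes "2 \<le> r^2" "0 < r" "0 \<le> x" "x < 1" "t = 1 + r^2*x" "u = 1 - x"
  shows "(r+1)^2 \<le> 1/t + r^2/u + (t^2 + r^2*u^2)/(u^2*t)"
proof -
  have tu: "0 < t" "0 < u" using assms by (auto simp: add_pos_nonneg)
  have "(1/t + r^2/u + (t^2 + r^2*u^2)/(u^2*t) - (r+1)^2) * (u^2*t)
     = u^2 + r^2*u*t + t^2 + r^2*u^2 - (r+1)^2*u^2*t"
    using tu by (simp add: field_simps power2_eq_square)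
  also have "\<dots> = (r-1)^2 - 2*r*(r^2-2)*x + (2*(r+1)^2*r^2 - 2*r)*x^2 - (r+1)^2*r^2*x^3"
    unfolding assms(5,6) by algebra
  finally have "0 \<le> (1/t + r^2/u + (t^2 + r^2*u^2)/(u^2*t) - (r+1)^2) * (u^2*t)"
    using two_point_slope_numerator_nonneg assms(1-4) by simp
  moreover have "0 < u^2*t" using tu by simp
  ultimately show ?thesis by (simp add: zero_le_mult_iff)
qed

lemma two_point_defect_identity:
  fixes r x t u :: real
  assumes "0 < t" "0 < u" "t = 1 + r^2*x" "u = 1 - x"
  shows "(1/t + r^2/u) * (t^2 + r^2*u^2) - (r^2+1)^2 - (t^2 + r^2*u^2 - (r^2+1)) * (r+1)^2
         = (r^2+1)*r^2*x^2*(r*(r+1)*x - (r-1))^2/(u*t)"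
proof -
  have "((1/t + r^2/u) * (t^2 + r^2*u^2) - (r^2+1)^2 - (t^2 + r^2*u^2 - (r^2+1)) * (r+1)^2) * (u*t)
      = (u + r^2*t) * (t^2 + r^2*u^2) - ((r^2+1)^2 + (t^2 + r^2*u^2 - (r^2+1)) * (r+1)^2) * (u*t)"
    using assms(1,2) by (simp add: field_simps)
  also have "\<dots> = (r^2+1)*r^2*x^2*(r*(r+1)*x - (r-1))^2"
    unfolding assms(3,4) by algebra
  finally show ?thesis using assms(1,2) by (simp add: eq_divide_eq)
qed

text \<open>The quadratic part is the Hermite interpolant of \<open>1/a\<close> at the nodes \<open>u\<close> (double) and \<open>t\<close>.\<close>

lemma reciprocal_hermite_expansion:
  fixes a t u :: real
  assumes "0 < a" "0 < t" "0 < u"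
  shows "1/a = 1/t + 2/u - (2/(u*t) + 1/u^2) * a + a^2/(u^2*t) + (u - a)^2*(t - a)/(u^2*t*a)"
  using assms by (simp add: field_simps power2_eq_square)

lemma hermite_remainder_nonneg:
  fixes a t u :: real
  assumes "0 < a" "a \<le> t" "0 < u"
  shows "0 \<le> (u - a)^2 * (t - a) / (u^2*t*a)"
  using assms by (intro divide_nonneg_pos mult_nonneg_nonneg) auto

lemma hermite_remainder_eq_0_iff:
  fixes a t u :: real
  assumes "0 < a" "0 < t" "0 < u"
  shows "(u - a)^2 * (t - a) / (u^2*t*a) = 0 \<longleftrightarrow> a = u \<or> a = t"
  using assms by auto

lemma sum_reciprocal_eq_two_point:
  fixes a :: "nat \<Rightarrow> real" and t u :: real
  assumes "\<forall>i<n. 0 < a i" "0 < t" "0 < u" "(\<Sum>i<n. a i) = t + (real n - 1) * u"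
  shows "(\<Sum>i<n. 1 / a i) = 1/t + (real n - 1)/u
           + ((\<Sum>i<n. (a i)^2) - (t^2 + (real n - 1) * u^2)) / (u^2*t)
           + (\<Sum>i<n. (u - a i)^2 * (t - a i) / (u^2*t*a i))"
proof -
  define R where "R = (\<Sum>i<n. (u - a i)^2 * (t - a i) / (u^2*t*a i))"
  have "(\<Sum>i<n. 1 / a i) = (\<Sum>i<n. (1/t + 2/u) - (2/(u*t) + 1/u^2) * a i + (a i)^2/(u^2*t)
                             + (u - a i)^2 * (t - a i) / (u^2*t*a i))"
    using assms(1-3) by (intro sum.cong refl reciprocal_hermite_expansion) auto
  also have "\<dots> = real n * (1/t + 2/u) - (2/(u*t) + 1/u^2) * (\<Sum>i<n. a i)
                   + (\<Sum>i<n. (a i)^2) / (u^2*t) + R"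
    unfolding R_def sum.distrib sum_subtractf sum_distrib_left[symmetric] sum_divide_distrib[symmetric]
    by (simp add: algebra_simps)
  also have "real n * (1/t + 2/u) - (2/(u*t) + 1/u^2) * (\<Sum>i<n. a i)
      = 1/t + (real n - 1)/u - (t^2 + (real n - 1) * u^2) / (u^2*t)"
    unfolding assms(4) using assms(2,3) by (simp add: field_simps power2_eq_square)
  finally show ?thesis unfolding R_def by (simp add: diff_divide_distrib)
qed

lemma sum_squares_ge_two_point:
  fixes a :: "nat \<Rightarrow> real" and u :: real
  assumes "k < n" "(\<Sum>i<n. a i) = a k + (real n - 1) * u"
  shows "(a k)^2 + (real n - 1) * u^2 \<le> (\<Sum>i<n. (a i)^2)"
proof -
  have "(a k - u)^2 \<le> (\<Sum>i<n. (a i - u)^2)"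
    using assms(1) by (intro member_le_sum) auto
  also have "\<dots> = (\<Sum>i<n. (a i)^2) - 2*u*(\<Sum>i<n. a i) + real n * u^2"
    by (simp add: power2_diff sum.distrib sum_subtractf sum_distrib_left sum_distrib_right
                  mult.commute mult.left_commute)
  finally show ?thesis unfolding assms(2) by (simp add: algebra_simps power2_eq_square)
qed

lemma max_coordinate_bounds:
  fixes a :: "nat \<Rightarrow> real"
  assumes "2 \<le> n" "\<forall>i<n. 0 < a i" "(\<Sum>i<n. a i) = real n" "k < n" "\<forall>i<n. a i \<le> a k"
  shows "1 \<le> a k" "a k < real n"
proof -
  have "real n \<le> real n * a k"
    using sum_mono[of "{..<n}" a "\<lambda>_. a k"] assms(3,5) by simp
  then show "1 \<le> a k" using assms(1) by simp
  define j :: nat where "j = (if k = 0 then 1 else 0)"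
  have j: "j < n" "j \<noteq> k" using assms(1) unfolding j_def by auto
  have "(\<Sum>i\<in>{k,j}. a i) \<le> (\<Sum>i<n. a i)"
    using assms(2,4) j by (intro sum_mono2) auto
  moreover have "0 < a j" using assms(2) j by simp
  ultimately show "a k < real n" using assms(3) j by simp
qed

definition two_point :: "nat \<Rightarrow> real \<Rightarrow> nat \<Rightarrow> real" where
  "two_point d x i = (if i = 0 then 1 + (real d - 1) * x else 1 - x)"

text \<open>Because \<open>1 / 0 = 0\<close>, this agrees with \<open>A B - d\<^sup>2 - (B - d) (d + 2 \<surd>(d - 1))\<close> only for
  positive \<open>a\<close>.\<close>

definition defect :: "nat \<Rightarrow> (nat \<Rightarrow> real) \<Rightarrow> real" where
  "defect d a = (\<Sum>i<d. 1 / a i) * B_fun d a - (real d)^2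
                - (B_fun d a - real d) * (real d + 2 * sqrt (real d - 1))"

lemma defect_permute:
  assumes "\<sigma> permutes {..<d}" "\<forall>i<d. a i = b (\<sigma> i)"
  shows "defect d a = defect d b"
proof -
  have "(\<Sum>i<d. g (a i)) = (\<Sum>i<d. g (b i))" for g :: "real \<Rightarrow> real"
  proof -
    have "(\<Sum>i<d. g (a i)) = (\<Sum>i<d. (g \<circ> b) (\<sigma> i))"
      using assms(2) by (intro sum.cong) auto
    also have "\<dots> = (\<Sum>i<d. g (b i))"
      using sum.permute[OF assms(1), of "g \<circ> b"] by (simp add: comp_def)
    finally show ?thesis .
  qed
  from this[of "\<lambda>y. 1/y"] this[of "\<lambda>y. y^2"] show ?thesis
    by (simp add: defect_def B_fun_def)
qed

lemma sum_two_point: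
  assumes "1 \<le> d"
  shows "(\<Sum>i<d. g (two_point d x i)) = g (1 + (real d - 1) * x) + (real d - 1) * g (1 - x)"
proof -
  obtain m where m: "d = Suc m" using assms by (cases d) auto
  have "(\<Sum>i<d. g (two_point d x i)) = g (two_point d x 0) + (\<Sum>i<m. g (two_point d x (Suc i)))"
    unfolding m by (rule sum.lessThan_Suc_shift)
  then show ?thesis using m by (simp add: two_point_def)
qed

lemma defect_two_point_sums:
  fixes x :: real
  assumes "1 \<le> d"
  defines "t \<equiv> 1 + (real d - 1) * x" and "u \<equiv> 1 - x"
  shows "defect d (two_point d x) = (1/t + (real d - 1)/u) * (t^2 + (real d - 1) * u^2) - (real d)^2
           - (t^2 + (real d - 1) * u^2 - real d) * (real d + 2 * sqrt (real d - 1))"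
  unfolding defect_def B_fun_def t_def u_def
  using sum_two_point[OF assms(1), of "\<lambda>y. 1/y"] sum_two_point[OF assms(1), of "\<lambda>y. y^2"]
  by simp

lemma defect_two_point:
  fixes d :: nat and x :: real
  assumes "2 \<le> d" "0 \<le> x" "x < 1"
  defines "r \<equiv> sqrt (real d - 1)"
  shows "defect d (two_point d x)
           = real d * r^2 * x^2 * (r*(r+1)*x - (r-1))^2 / ((1 - x) * (1 + r^2*x))"
proof -
  have r2: "r^2 = real d - 1" using assms(1) by (simp add: r_def)
  have c: "(r+1)^2 = real d + 2*r" using r2 by (simp add: power2_eq_square algebra_simps)
  define t where "t = 1 + r^2*x"
  define u where "u = 1 - x"
  have tu: "0 < t" "0 < u" using assms(2,3) by (auto simp: t_def u_def add_pos_nonneg)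
  have "defect d (two_point d x)
      = (1/t + r^2/u) * (t^2 + r^2*u^2) - (r^2+1)^2 - (t^2 + r^2*u^2 - (r^2+1)) * (r+1)^2"
    using defect_two_point_sums[of d x] assms(1) unfolding r_def[symmetric]
    by (simp add: r2 c t_def u_def)
  also have "\<dots> = real d * r^2 * x^2 * (r*(r+1)*x - (r-1))^2 / ((1 - x) * (1 + r^2*x))"
    using two_point_defect_identity[OF tu t_def u_def] r2 by (simp add: t_def u_def)
  finally show ?thesis .
qed

lemma defect_two_point_nonneg:
  assumes "2 \<le> d" "0 \<le> x" "x < 1"
  shows "0 \<le> defect d (two_point d x)"
  unfolding defect_two_point[OF assms] using assms by simp

lemma defect_two_point_eq_0_iff:
  assumes "2 \<le> d" "0 \<le> x" "x < 1"
  defines "r \<equiv> sqrt (real d - 1)"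
  shows "defect d (two_point d x) = 0 \<longleftrightarrow> x = 0 \<or> x = (r - 1) / (r * (r + 1))"
proof -
  have "0 < r" using assms(1) by (simp add: r_def)
  then have r: "0 < r" "0 < r * (r + 1)" by simp_all
  have "0 < 1 - x" "0 < 1 + r^2*x" using assms(2,3) by (simp_all add: add_pos_nonneg)
  then have "defect d (two_point d x) = 0 \<longleftrightarrow> x = 0 \<or> r * (r + 1) * x = r - 1"
    unfolding defect_two_point[OF assms(1-3), folded r_def] using assms(1) r by simp
  also have "\<dots> \<longleftrightarrow> x = 0 \<or> x = (r - 1) / (r * (r + 1))"
    using r by (auto simp: eq_divide_eq algebra_simps)
  finally show ?thesis .
qed

lemma a_star_eq_two_point:
  assumes "2 \<le> d"
  defines "r \<equiv> sqrt (real d - 1)"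
  shows "a_star d = two_point d ((r - 1) / (r * (r + 1)))"
    and "0 \<le> (r - 1) / (r * (r + 1))" "(r - 1) / (r * (r + 1)) < 1"
proof -
  have "1 \<le> r" using assms(1) by (simp add: r_def)
  then have r: "0 < r" "0 < r + r * r" by (simp_all add: add_pos_pos)
  have d: "real d = r^2 + 1" using assms(1) by (simp add: r_def)
  show "a_star d = two_point d ((r - 1) / (r * (r + 1)))"
  proof
    fix i
    show "a_star d i = two_point d ((r - 1) / (r * (r + 1))) i"
      unfolding a_star_def two_point_def r_def[symmetric] d using r
      by (simp add: field_simps power2_eq_square)
  qed
  show "0 \<le> (r - 1) / (r * (r + 1))" "(r - 1) / (r * (r + 1)) < 1"
    using \<open>1 \<le> r\<close> r by (simp_all add: divide_less_eq algebra_simps add_pos_nonneg)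
qed

lemma defect_permuted_a_star:
  assumes "2 \<le> d" "\<sigma> permutes {..<d}" "\<forall>i<d. a i = a_star d (\<sigma> i)"
  shows "defect d a = 0"
  using defect_permute[OF assms(2,3)] a_star_eq_two_point[OF assms(1)]
    defect_two_point_eq_0_iff[OF assms(1)] by simp

lemma defect_ones:
  assumes "\<forall>i<d. a i = 1"
  shows "defect d a = 0"
  using assms by (simp add: defect_def B_fun_def power2_eq_square)

lemma two_valued_eq_two_point:
  fixes a :: "nat \<Rightarrow> real" and x :: real
  assumes "k < d" "(\<Sum>i<d. a i) = real d" "0 \<le> x" "a k = 1 + (real d - 1) * x"
    and "\<forall>i<d. a i = 1 - x \<or> a i = a k"
  shows "\<forall>i<d. a i = two_point d x (Transposition.transpose 0 k i)"
proof -
  have "(\<Sum>i<d. a i) = a k + (\<Sum>j\<in>{..<d}-{k}. a j)"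
    using assms(1) by (simp add: sum.remove)
  then have "(\<Sum>j\<in>{..<d}-{k}. a j) = (real d - 1) * (1 - x)"
    using assms(2,4) by (simp add: algebra_simps)
  moreover have "real (card ({..<d}-{k})) = real d - 1"
    using assms(1) by simp
  ultimately have "(\<Sum>j\<in>{..<d}-{k}. a j - (1 - x)) = 0"
    by (simp add: sum_subtractf)
  moreover have "\<forall>j\<in>{..<d}-{k}. 0 \<le> a j - (1 - x)"
    using assms(3-5) by (force simp: algebra_simps)
  ultimately have "\<forall>j\<in>{..<d}-{k}. a j = 1 - x"
    using sum_nonneg_eq_0_iff[of "{..<d}-{k}" "\<lambda>j. a j - (1 - x)"] by simp
  then show ?thesis
    using assms(4) by (auto simp: two_point_def Transposition.transpose_def)
qed

lemma defect_decomposition: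
  fixes d :: nat and a :: "nat \<Rightarrow> real" and x :: real
  assumes "2 \<le> d" "\<forall>i<d. 0 < a i" "(\<Sum>i<d. a i) = real d" "0 \<le> x" "x < 1"
  defines "t \<equiv> 1 + (real d - 1) * x" and "u \<equiv> 1 - x"
  defines "B \<equiv> B_fun d a" and "B\<^sub>0 \<equiv> t^2 + (real d - 1) * u^2"
  shows "defect d a = defect d (two_point d x)
           + B * (\<Sum>i<d. (u - a i)^2 * (t - a i) / (u^2*t*a i))
           + (B - B\<^sub>0) * (1/t + (real d - 1)/u + B / (u^2*t) - (real d + 2 * sqrt (real d - 1)))"
proof -
  define S where "S = (\<Sum>i<d. (u - a i)^2 * (t - a i) / (u^2*t*a i))"
  have tu: "0 < t" "0 < u" using assms(1,4,5) by (simp_all add: t_def u_def add_pos_nonneg)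
  have "(\<Sum>i<d. a i) = t + (real d - 1) * u"
    unfolding assms(3) t_def u_def by (simp add: algebra_simps)
  from sum_reciprocal_eq_two_point[OF assms(2) tu this]
  have A: "(\<Sum>i<d. 1 / a i) = 1/t + (real d - 1)/u + (B - B\<^sub>0) / (u^2*t) + S"
    by (simp add: S_def B_def B\<^sub>0_def B_fun_def)
  have "1 \<le> d" using assms(1) by simp
  show ?thesis
    unfolding defect_def[of d a] defect_two_point_sums[OF \<open>1 \<le> d\<close>, of x, folded t_def u_def]
      A B_def[symmetric] B\<^sub>0_def[symmetric] S_def[symmetric]
    using tu by (simp add: field_simps power2_eq_square)
qed

lemma defect_ge_two_point:
  fixes d :: nat and a :: "nat \<Rightarrow> real"
  assumes d: "3 \<le> d" and pos: "\<forall>i<d. 0 < a i" and sum: "(\<Sum>i<d. a i) = real d"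
    and k: "k < d" "\<forall>i<d. a i \<le> a k"
  defines "x \<equiv> (a k - 1) / (real d - 1)"
  shows "0 \<le> x" "x < 1" "defect d (two_point d x) \<le> defect d a"
    and "defect d a = defect d (two_point d x) \<Longrightarrow> \<forall>i<d. a i = 1 - x \<or> a i = a k"
proof -
  define r where "r = sqrt (real d - 1)"
  define t where "t = 1 + r^2 * x"
  define u where "u = 1 - x"
  have r: "real d - 1 = r^2" "2 \<le> r^2" "0 < r" using d by (simp_all add: r_def)
  have c: "real d + 2 * r = (r + 1)^2" using r(1) by (simp add: algebra_simps power2_eq_square)
  have t: "a k = t" using d by (simp add: t_def x_def r(1)[symmetric])
  have "1 \<le> a k" "a k < real d" using max_coordinate_bounds[OF _ pos sum k] d by simp_all
  then show x: "0 \<le> x" "x < 1" using d by (simp_all add: x_def)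
  moreover have "0 \<le> r^2 * x" using x by simp
  ultimately have tu: "0 < t" "0 < u" "u \<le> t" unfolding t_def u_def by linarith+
  define B where "B = B_fun d a"
  define B\<^sub>0 where "B\<^sub>0 = t^2 + r^2 * u^2"
  define S where "S = (\<Sum>i<d. (u - a i)^2 * (t - a i) / (u^2*t*a i))"
  have split: "defect d a = defect d (two_point d x) + B * S
                 + (B - B\<^sub>0) * (1/t + r^2/u + B / (u^2*t) - (r + 1)^2)"
    using defect_decomposition[OF _ pos sum x] d
    unfolding r(1) t_def[symmetric] u_def[symmetric] B_def[symmetric] B\<^sub>0_def[symmetric]
      S_def[symmetric] by (simp add: abs_of_pos[OF r(3)] c)
  have sum': "(\<Sum>i<d. a i) = a k + r^2 * u"
    unfolding sum t t_def u_def r(1)[symmetric] by (simp add: algebra_simps)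
  have B\<^sub>0: "B\<^sub>0 \<le> B" "0 < B\<^sub>0"
    using sum_squares_ge_two_point[of k d a u] k(1) sum' tu
    by (simp_all add: B_def B\<^sub>0_def B_fun_def r(1) t add_pos_nonneg)
  have "(r + 1)^2 \<le> 1/t + r^2/u + B\<^sub>0 / (u^2*t)"
    using two_point_slope_ge[OF r(2,3) x t_def u_def] by (simp add: B\<^sub>0_def)
  also have "\<dots> \<le> 1/t + r^2/u + B / (u^2*t)"
    using B\<^sub>0 tu by (simp add: divide_right_mono)
  finally have slope: "0 \<le> (B - B\<^sub>0) * (1/t + r^2/u + B / (u^2*t) - (r + 1)^2)"
    using B\<^sub>0 by simp
  have S: "0 \<le> S" using pos k tu unfolding S_def t[symmetric]
    by (intro sum_nonneg hermite_remainder_nonneg) auto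
  show "defect d (two_point d x) \<le> defect d a"
    using split S slope B\<^sub>0 by simp
  assume "defect d a = defect d (two_point d x)"
  moreover have "0 \<le> B * S" using S B\<^sub>0 by simp
  ultimately have "B * S = 0" using split slope by linarith
  then have "S = 0" using B\<^sub>0 by simp
  then have "\<forall>i<d. (u - a i)^2 * (t - a i) / (u^2*t*a i) = 0"
    using pos k tu unfolding S_def t[symmetric]
    by (subst (asm) sum_nonneg_eq_0_iff) (auto intro: hermite_remainder_nonneg)
  then show "\<forall>i<d. a i = 1 - x \<or> a i = a k"
    using pos tu hermite_remainder_eq_0_iff unfolding t u_def by blast
qed

lemma defect_nonneg_eq_0_iff:
  fixes d :: nat and a :: "nat \<Rightarrow> real"
  assumes d: "3 \<le> d" and pos: "\<forall>i<d. 0 < a i" and sum: "(\<Sum>i<d. a i) = real d"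
  shows "0 \<le> defect d a"
    and "defect d a = 0 \<longleftrightarrow>
           (\<forall>i<d. a i = 1) \<or> (\<exists>\<sigma>. \<sigma> permutes {..<d} \<and> (\<forall>i<d. a i = a_star d (\<sigma> i)))"
proof -
  have d2: "2 \<le> d" using d by simp
  have "Max (a ` {..<d}) \<in> a ` {..<d}" using d by (intro Max_in) (auto simp: lessThan_empty_iff)
  then obtain k where "k < d" "a k = Max (a ` {..<d})" by auto
  then have k: "k < d" "\<forall>i<d. a i \<le> a k" by simp_all
  define x where "x = (a k - 1) / (real d - 1)"
  note reduction = defect_ge_two_point[OF d pos sum k, folded x_def]
  have D\<^sub>0: "0 \<le> defect d (two_point d x)"
    using defect_two_point_nonneg[OF d2 reduction(1,2)] .
  then show "0 \<le> defect d a" using reduction(3) by linarith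
  show "defect d a = 0 \<longleftrightarrow>
           (\<forall>i<d. a i = 1) \<or> (\<exists>\<sigma>. \<sigma> permutes {..<d} \<and> (\<forall>i<d. a i = a_star d (\<sigma> i)))"
  proof
    assume "defect d a = 0"
    then have eq: "defect d a = defect d (two_point d x)" "defect d (two_point d x) = 0"
      using D\<^sub>0 reduction(3) by linarith+
    have "a k = 1 + (real d - 1) * x" using d by (simp add: x_def)
    from two_valued_eq_two_point[OF k(1) sum reduction(1) this reduction(4)[OF eq(1)]]
    have a: "\<forall>i<d. a i = two_point d x (Transposition.transpose 0 k i)" .
    have "x = 0 \<or> two_point d x = a_star d"
      using eq(2) defect_two_point_eq_0_iff[OF d2 reduction(1,2)] a_star_eq_two_point(1)[OF d2]
      by auto
    then show "(\<forall>i<d. a i = 1) \<or> (\<exists>\<sigma>. \<sigma> permutes {..<d} \<and> (\<forall>i<d. a i = a_star d (\<sigma> i)))"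
    proof
      assume "x = 0"
      then show ?thesis using a by (simp add: two_point_def)
    next
      assume "two_point d x = a_star d"
      moreover have "Transposition.transpose 0 k permutes {..<d}"
        using k d by (intro permutes_swap_id) auto
      ultimately show ?thesis using a by auto
    qed
  next
    assume "(\<forall>i<d. a i = 1) \<or> (\<exists>\<sigma>. \<sigma> permutes {..<d} \<and> (\<forall>i<d. a i = a_star d (\<sigma> i)))"
    then show "defect d a = 0" using defect_ones defect_permuted_a_star[OF d2] by blast
  qed
qed

lemma B_fun_pos:
  assumes "a \<in> K d" "0 < d"
  shows "0 < B_fun d a"
proof (rule ccontr)
  assume "\<not> 0 < B_fun d a"
  moreover have "0 \<le> B_fun d a" by (simp add: B_fun_def sum_nonneg)
  ultimately have "\<forall>i<d. a i = 0"
    using sum_nonneg_eq_0_iff[of "{..<d}" "\<lambda>i. (a i)^2"] by (simp add: B_fun_def)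
  then show False using assms by (simp add: K_def)
qed

lemma a_star_pos:
  assumes "2 \<le> d"
  shows "0 < a_star d i"
proof -
  have "0 < sqrt (real d - 1)" "2 \<le> real d" using assms by auto
  then have "1 < sqrt (real d - 1) + real d" by linarith
  then show ?thesis using assms by (auto simp: a_star_def intro!: divide_pos_pos mult_pos_pos)
qed

theorem lemma7p2:
  fixes d :: nat and a :: "nat \<Rightarrow> real"
  assumes "d \<ge> 3" and "a \<in> K d"
  shows "ereal ((B_fun d a - real d) * (real d + 2 * sqrt (real d - 1)))
           \<le> A_fun d a * ereal (B_fun d a) - ereal ((real d)^2)
         \<and> (ereal ((B_fun d a - real d) * (real d + 2 * sqrt (real d - 1)))
           = A_fun d a * ereal (B_fun d a) - ereal ((real d)^2)
         \<longleftrightarrow> (\<forall>i<d. a i = 1) \<or>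
             (\<exists>\<sigma>. \<sigma> permutes {..<d} \<and> (\<forall>i<d. a i = a_star d (\<sigma> i))))"
proof (cases "\<exists>i<d. a i = 0")
  case True
  then obtain i where i: "i < d" "a i = 0" by blast
  have "A_fun d a * ereal (B_fun d a) - ereal ((real d)^2) = \<infinity>"
    using True B_fun_pos[OF assms(2)] assms(1) by (simp add: A_fun_def)
  moreover have "a_star d j \<noteq> 0" for j using a_star_pos[of d j] assms(1) by simp
  ultimately show ?thesis using i by auto
next
  case False
  with assms(2) have pos: "\<forall>i<d. 0 < a i" and sum: "(\<Sum>i<d. a i) = real d"
    by (auto simp: K_def less_le)
  have "A_fun d a * ereal (B_fun d a) - ereal ((real d)^2)
      = ereal ((B_fun d a - real d) * (real d + 2 * sqrt (real d - 1)) + defect d a)"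
    using False by (simp add: A_fun_def defect_def)
  then show ?thesis using defect_nonneg_eq_0_iff[OF assms(1) pos sum] by simp
qed

end
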